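(* In the qubit setting of the context, the optimal value of (AD) is $F_e=\frac12+\frac12\sqrt{1-\big(\sin(2\alpha)\cos(2n\alpha)\big)^2}.$
   Context: Fix an integer $n\ge1$ and real $\alpha$ with $0<\alpha<\pi/(4n)$. On $\mathbb{C}^2$ with computational basis $\{|0\rangle,|1\rangle\}$ let $|+\rangle=(|0\rangle+|1\rangle)/\sqrt2$, $U_0=e^{i\alpha}|0\rangle\langle0|+e^{-i\alpha}|1\rangle\langle1|$, $U_1=e^{-i\alpha}|0\rangle\langle0|+e^{i\alpha}|1\rangle\langle1|$, $|\psi^*_{n,i}\rangle=(U_i^* )^n|+\rangle$ (complex conjugation in the computational basis). For $A=\sum_{ij}A_{ij}|i\rangle\langle j|$ set $|A\rangle\!\rangle:=\sum_{ij}A_{ij}|j\rangle|i\rangle$. Systems $\mathcal H_0$ (memory), $\mathcal H_1$ (input), $\mathcal H_2$ (output) are copies of $\mathbb{C}^2$. The Choi operator of a linear map $\mathcal R:L(\mathcal H_0\otimes\mathcal H_1)\to L(\mathcal H_2)$ is $R=(\mathcal I\otimes\mathcal R)(|I\rangle\!\rangle\langle\!\langle I|)$. Let $D=\frac18\sum_{i=0,1}|\psi^*_{n,i}\rangle\langle\psi^*_{n,i}|\otimes|U_i\rangle\!\rangle\langle\!\langle U_i|$. Problem (AD): maximize $\mathrm{Tr}[RD]$ over $R\ge0$ with $\mathrm{Tr}_2R=I$. For a retrieval channel $\mathcal R$ with memory states $|\psi_{n,i}\rangle=U_i^n|+\rangle$, $\mathrm{Tr}[RD]$ equals the average over $i=0,1$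 of the process fidelity $\frac14\langle\!\langle U_i|X_i|U_i\rangle\!\rangle$, where $X_i$ is the Choi operator of $\xi\mapsto\mathcal R(|\psi_{n,i}\rangle\langle\psi_{n,i}|\otimes\xi)$. *)

theory Defs
  imports Complex_Main "HOL-Library.Complex_Order"
begin

text \<open>Qubit operators are functions nat => nat => complex, meaningful on
indices below 2. Operators on H0 (x) H1 (x) H2 are functions nat => nat => complex,
meaningful on indices below 8, where the basis vector |a0>|a1>|a2> has index
4*a0 + 2*a1 + a2 (H0 most significant). Vectors on H1 (x) H2 use index 2*a1 + a2.\<close>

definition mmult2 :: "(nat \<Rightarrow> nat \<Rightarrow> complex) \<Rightarrow> (nat \<Rightarrow> nat \<Rightarrow> complex) \<Rightarrow> nat \<Rightarrow> nat \<Rightarrow> complex" where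
  "mmult2 A B = (\<lambda>a b. \<Sum>k<2. A a k * B k b)"

definition id2 :: "nat \<Rightarrow> nat \<Rightarrow> complex" where
  "id2 = (\<lambda>a b. if a = b then 1 else 0)"

fun mpow2 :: "(nat \<Rightarrow> nat \<Rightarrow> complex) \<Rightarrow> nat \<Rightarrow> nat \<Rightarrow> nat \<Rightarrow> complex" where
  "mpow2 A 0 = id2"
| "mpow2 A (Suc m) = mmult2 A (mpow2 A m)"

definition conj_mat :: "(nat \<Rightarrow> nat \<Rightarrow> complex) \<Rightarrow> nat \<Rightarrow> nat \<Rightarrow> complex" where
  "conj_mat A = (\<lambda>a b. cnj (A a b))"

definition Uop :: "real \<Rightarrow> nat \<Rightarrow> nat \<Rightarrow> nat \<Rightarrow> complex" where
  "Uop \<alpha> i = (\<lambda>a b. if a = b then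
      (if (a = 0) = (i = 0) then exp (\<i> * of_real \<alpha>) else exp (- \<i> * of_real \<alpha>)) else 0)"

definition plus_state :: "nat \<Rightarrow> complex" where
  "plus_state = (\<lambda>b. of_real (1 / sqrt 2))"

definition psi_star :: "real \<Rightarrow> nat \<Rightarrow> nat \<Rightarrow> nat \<Rightarrow> complex" where
  "psi_star \<alpha> n i = (\<lambda>a. \<Sum>b<2. mpow2 (conj_mat (Uop \<alpha> i)) n a b * plus_state b)"

text \<open>|A>> = sum_{ij} A_ij |j>|i>; the component at |j>|i> (index 2*j+i) is A_ij.\<close>
definition vecop :: "(nat \<Rightarrow> nat \<Rightarrow> complex) \<Rightarrow> nat \<Rightarrow> complex" where
  "vecop A = (\<lambda>k. A (k mod 2) (k div 2))"

text \<open>D = 1/8 sum_i |psi*_{n,i}><psi*_{n,i}| (x) |U_i>><<U_i|.\<close>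
definition Dop :: "real \<Rightarrow> nat \<Rightarrow> nat \<Rightarrow> nat \<Rightarrow> complex" where
  "Dop \<alpha> n = (\<lambda>r c. (1/8) * (\<Sum>i<2.
      psi_star \<alpha> n i (r div 4) * cnj (psi_star \<alpha> n i (c div 4)) *
      vecop (Uop \<alpha> i) (r mod 4) * cnj (vecop (Uop \<alpha> i) (c mod 4))))"

text \<open>Positive semidefinite 8x8 operator (complex order: 0 <= z iff z real and nonnegative).\<close>
definition psd8 :: "(nat \<Rightarrow> nat \<Rightarrow> complex) \<Rightarrow> bool" where
  "psd8 R \<longleftrightarrow> (\<forall>v :: nat \<Rightarrow> complex. 0 \<le> (\<Sum>i<8. \<Sum>j<8. cnj (v i) * R i j * v j))"

definition ptrace2 :: "(nat \<Rightarrow> nat \<Rightarrow> complex) \<Rightarrow> nat \<Rightarrow> nat \<Rightarrow> complex" where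
  "ptrace2 R = (\<lambda>x y. \<Sum>k<2. R (2*x + k) (2*y + k))"

definition AD_feasible :: "(nat \<Rightarrow> nat \<Rightarrow> complex) \<Rightarrow> bool" where
  "AD_feasible R \<longleftrightarrow> psd8 R \<and> (\<forall>x<4. \<forall>y<4. ptrace2 R x y = (if x = y then 1 else 0))"

definition tr8 :: "(nat \<Rightarrow> nat \<Rightarrow> complex) \<Rightarrow> (nat \<Rightarrow> nat \<Rightarrow> complex) \<Rightarrow> complex" where
  "tr8 R D = (\<Sum>i<8. \<Sum>j<8. R i j * D j i)"

end

theory Submission imports Defs begin

text \<open>(AD) is a semidefinite program, and both bounds come from explicit certificates.
The operator D is real: it is supported on the four basis vectors 000, 011, 100, 111, where its
entries are cos(t_r - t_c)/8 for suitable phases t_r, and these cosines are polynomials in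
a = cos 2\<alpha>, b = sin 2n\<alpha> sin 2\<alpha> and P = cos 2n\<alpha>. Put S = sqrt(a^2 + b^2), which is the
square root in the claimed value.
A rank-two Choi operator |u1\<rangle>\<langle>u1| + |u2\<rangle>\<langle>u2| is feasible and attains (1 + S)/2.
Conversely Y \<otimes> I, with Y block diagonal in the parity of H1 and Tr Y = (1 + S)/2, exceeds D by
a sum of positive Gram operators of pairs of real vectors; hence for every feasible R,
Tr[R D] \<le> Tr[R (Y \<otimes> I)] = Tr[Y Tr_2 R] = Tr Y.
The hypothesis \<alpha> < \<pi>/(4n) is only needed to make sin 2\<alpha> < 1, i.e. S > 0.\<close>

section \<open>Pairing positive operators with Gram operators\<close>

definition cmat :: "(nat \<Rightarrow> nat \<Rightarrow> real) \<Rightarrow> nat \<Rightarrow> nat \<Rightarrow> complex" where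
  "cmat M = (\<lambda>i j. complex_of_real (M i j))"

definition sesq8 :: "(nat \<Rightarrow> nat \<Rightarrow> complex) \<Rightarrow> (nat \<Rightarrow> complex) \<Rightarrow> (nat \<Rightarrow> complex) \<Rightarrow> complex" where
  "sesq8 R x y = (\<Sum>i<8. \<Sum>j<8. cnj (x i) * R i j * y j)"

definition gram2 :: "real \<Rightarrow> real \<Rightarrow> real \<Rightarrow> (nat \<Rightarrow> real) \<Rightarrow> (nat \<Rightarrow> real) \<Rightarrow> nat \<Rightarrow> nat \<Rightarrow> real" where
  "gram2 g11 g12 g22 x y =
     (\<lambda>i j. g11 * (x i * x j) + g12 * (x i * y j + y i * x j) + g22 * (y i * y j))"

lemma tr8_cong: "(\<And>i j. i < 8 \<Longrightarrow> j < 8 \<Longrightarrow> M i j = N i j) \<Longrightarrow> tr8 R M = tr8 R N"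
  unfolding tr8_def by (intro sum.cong refl) auto

lemma tr8_cmat_add: "tr8 R (cmat (\<lambda>i j. M i j + N i j)) = tr8 R (cmat M) + tr8 R (cmat N)"
  unfolding tr8_def cmat_def by (simp add: sum.distrib distrib_left)

lemma sesq8_scaleR_add_left:
  "sesq8 R (\<lambda>i. of_real a * x i + of_real b * y i) z = of_real a * sesq8 R x z + of_real b * sesq8 R y z"
  unfolding sesq8_def by (simp add: algebra_simps sum.distrib sum_distrib_left)

lemma sesq8_scaleR_add_right:
  "sesq8 R z (\<lambda>i. of_real a * x i + of_real b * y i) = of_real a * sesq8 R z x + of_real b * sesq8 R z y"
  unfolding sesq8_def by (simp add: algebra_simps sum.distrib sum_distrib_left)

lemma psd8_sesq8_nonneg: "psd8 R \<Longrightarrow> 0 \<le> Re (sesq8 R v v)"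
  unfolding psd8_def sesq8_def by (simp add: less_eq_complex_def)

lemma tr8_gram2:
  "tr8 R (cmat (gram2 g11 g12 g22 x y)) =
     of_real g11 * sesq8 R (of_real \<circ> x) (of_real \<circ> x)
   + of_real g12 * (sesq8 R (of_real \<circ> y) (of_real \<circ> x) + sesq8 R (of_real \<circ> x) (of_real \<circ> y))
   + of_real g22 * sesq8 R (of_real \<circ> y) (of_real \<circ> y)"
  unfolding tr8_def sesq8_def cmat_def gram2_def
  by (simp add: algebra_simps sum.distrib sum_distrib_left)

text \<open>Completing the square: g11 times the pairing is the R-norm of g11 x + g12 y plus
(g11 g22 - g12^2) times the R-norm of y.\<close>
lemma tr8_gram2_nonneg:
  assumes R: "psd8 R" and "0 \<le> g11" "0 \<le> g22" and det: "g12\<^sup>2 \<le> g11 * g22"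
  shows "0 \<le> Re (tr8 R (cmat (gram2 g11 g12 g22 x y)))"
proof -
  define X where "X = (of_real \<circ> x :: nat \<Rightarrow> complex)"
  define Y where "Y = (of_real \<circ> y :: nat \<Rightarrow> complex)"
  have tr: "Re (tr8 R (cmat (gram2 g11 g12 g22 x y))) =
      g11 * Re (sesq8 R X X) + g12 * (Re (sesq8 R Y X) + Re (sesq8 R X Y)) + g22 * Re (sesq8 R Y Y)"
    by (simp add: tr8_gram2 X_def Y_def)
  have YY: "0 \<le> Re (sesq8 R Y Y)"
    using R by (rule psd8_sesq8_nonneg)
  show ?thesis
  proof (cases "g11 = 0")
    case True
    then show ?thesis using det YY assms(3) unfolding tr by simp
  next
    case False
    have "0 \<le> Re (sesq8 R (\<lambda>i. of_real g11 * X i + of_real g12 * Y i) (\<lambda>i. of_real g11 * X i + of_real g12 * Y i))"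
      using R by (rule psd8_sesq8_nonneg)
    then have square: "0 \<le> g11 * (g11 * Re (sesq8 R X X) + g12 * Re (sesq8 R X Y))
                          + g12 * (g11 * Re (sesq8 R Y X) + g12 * Re (sesq8 R Y Y))"
      by (simp add: sesq8_scaleR_add_left sesq8_scaleR_add_right)
    have rest: "0 \<le> (g11 * g22 - g12\<^sup>2) * Re (sesq8 R Y Y)"
      using det YY by simp
    have "g11 * Re (tr8 R (cmat (gram2 g11 g12 g22 x y))) =
        g11 * (g11 * Re (sesq8 R X X) + g12 * Re (sesq8 R X Y))
      + g12 * (g11 * Re (sesq8 R Y X) + g12 * Re (sesq8 R Y Y))
      + (g11 * g22 - g12\<^sup>2) * Re (sesq8 R Y Y)"
      unfolding tr by (simp add: algebra_simps power2_eq_square)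
    then have "0 \<le> g11 * Re (tr8 R (cmat (gram2 g11 g12 g22 x y)))"
      using square rest by linarith
    then show ?thesis using False assms(2) by (simp add: zero_le_mult_iff)
  qed
qed

section \<open>The operator D in closed form\<close>

lemma sum_lessThan_2: "(\<Sum>k<2. f k) = f 0 + f (Suc 0)"
  by (simp add: numeral_2_eq_2)

lemma mpow2_diagonal:
  assumes "a < 2" "b < 2"
  shows "mpow2 (\<lambda>x y. if x = y then d x else 0) m a b = (if a = b then d a ^ m else 0)"
  using assms
proof (induction m arbitrary: a b)
  case 0
  then show ?case by (simp add: id2_def)
next
  case (Suc m)
  then show ?case
    by (simp add: mmult2_def sum_lessThan_2) (auto simp: less_2_cases_iff)
qed

lemma exp_i_of_real: "exp (\<i> * complex_of_real x) = cis x"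
  by (simp add: cis_conv_exp)

lemma exp_minus_i_of_real:
  "exp (- \<i> * complex_of_real x) = cis (- x)" "exp (- (\<i> * complex_of_real x)) = cis (- x)"
  by (simp_all add: cis_conv_exp)

lemma conj_mat_Uop:
  "conj_mat (Uop \<alpha> i) = (\<lambda>x y. if x = y then (if (x = 0) = (i = 0) then cis (- \<alpha>) else cis \<alpha>) else 0)"
  by (auto simp: conj_mat_def Uop_def fun_eq_iff exp_i_of_real exp_minus_i_of_real cis_cnj)

lemma psi_star_eq:
  "psi_star \<alpha> n 0 0 = cis (- (real n * \<alpha>)) * of_real (1 / sqrt 2)"
  "psi_star \<alpha> n 0 (Suc 0) = cis (real n * \<alpha>) * of_real (1 / sqrt 2)"
  "psi_star \<alpha> n (Suc 0) 0 = cis (real n * \<alpha>) * of_real (1 / sqrt 2)"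
  "psi_star \<alpha> n (Suc 0) (Suc 0) = cis (- (real n * \<alpha>)) * of_real (1 / sqrt 2)"
  unfolding psi_star_def conj_mat_Uop sum_lessThan_2
  by (simp_all add: mpow2_diagonal plus_state_def DeMoivre)

definition Dvec :: "real \<Rightarrow> nat \<Rightarrow> nat \<Rightarrow> nat \<Rightarrow> complex" where
  "Dvec \<alpha> n i r = psi_star \<alpha> n i (r div 4) * vecop (Uop \<alpha> i) (r mod 4)"

definition D_support :: "nat \<Rightarrow> bool" where
  "D_support r \<longleftrightarrow> r = 0 \<or> r = 3 \<or> r = 4 \<or> r = 7"

definition D_phase :: "real \<Rightarrow> real \<Rightarrow> nat \<Rightarrow> real" where
  "D_phase p q r = (if r = 0 then q - p else if r = 3 then - (p + q) else if r = 4 then p + q else p - q)"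

lemma Dop_Dvec:
  "Dop \<alpha> n r c = 1/8 * (Dvec \<alpha> n 0 r * cnj (Dvec \<alpha> n 0 c) + Dvec \<alpha> n 1 r * cnj (Dvec \<alpha> n 1 c))"
  unfolding Dop_def sum_lessThan_2 Dvec_def by (simp add: mult_ac)

lemma Dvec_eq:
  assumes "r < 8"
  shows "Dvec \<alpha> n 0 r = (if D_support r then of_real (1 / sqrt 2) * cis (D_phase (real n * \<alpha>) \<alpha> r) else 0)"
    and "Dvec \<alpha> n 1 r = cnj (Dvec \<alpha> n 0 r)"
proof -
  have "r \<in> {0, 1, 2, 3, 4, 5, 6, 7}" using assms by auto
  then have "Dvec \<alpha> n 0 r = (if D_support r then of_real (1 / sqrt 2) * cis (D_phase (real n * \<alpha>) \<alpha> r) else 0)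
    \<and> Dvec \<alpha> n 1 r = cnj (Dvec \<alpha> n 0 r)"
    by (auto simp: Dvec_def psi_star_eq vecop_def Uop_def D_support_def D_phase_def
        exp_i_of_real exp_minus_i_of_real cis_mult cis_cnj algebra_simps)
  then show "Dvec \<alpha> n 0 r = (if D_support r then of_real (1 / sqrt 2) * cis (D_phase (real n * \<alpha>) \<alpha> r) else 0)"
    and "Dvec \<alpha> n 1 r = cnj (Dvec \<alpha> n 0 r)" by auto
qed

lemma Dop_eq_cos_phase:
  assumes "r < 8" "c < 8"
  shows "Dop \<alpha> n r c = (if D_support r \<and> D_support c
           then of_real (cos (D_phase (real n * \<alpha>) \<alpha> r - D_phase (real n * \<alpha>) \<alpha> c) / 8) else 0)"
proof -
  have "Dop \<alpha> n r c = 1/8 * (Dvec \<alpha> n 0 r * cnj (Dvec \<alpha> n 0 c) + cnj (Dvec \<alpha> n 0 r * cnj (Dvec \<alpha> n 0 c)))"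
    unfolding Dop_Dvec Dvec_eq(2)[OF assms(1)] Dvec_eq(2)[OF assms(2)] by simp
  also have "\<dots> = (if D_support r \<and> D_support c
           then of_real (cos (D_phase (real n * \<alpha>) \<alpha> r - D_phase (real n * \<alpha>) \<alpha> c) / 8) else 0)"
    unfolding complex_add_cnj Dvec_eq(1)[OF assms(1)] Dvec_eq(1)[OF assms(2)]
    by (simp add: cis_cnj cis_mult cos_diff flip: of_real_mult)
  finally show ?thesis .
qed

definition phase_cos :: "real \<Rightarrow> real \<Rightarrow> real \<Rightarrow> nat \<Rightarrow> nat \<Rightarrow> real" where
  "phase_cos a b P r c = (if r = c then 1
    else if (r = 0 \<and> c = 4) \<or> (r = 4 \<and> c = 0) \<or> (r = 3 \<and> c = 7) \<or> (r = 7 \<and> c = 3) then P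
    else if (r = 0 \<and> c = 3) \<or> (r = 3 \<and> c = 0) \<or> (r = 4 \<and> c = 7) \<or> (r = 7 \<and> c = 4) then a
    else if (r = 0 \<and> c = 7) \<or> (r = 7 \<and> c = 0) then a * P + b
    else a * P - b)"

lemma cos_D_phase_diff:
  assumes "D_support r" "D_support c"
  shows "cos (D_phase p q r - D_phase p q c) = phase_cos (cos (2*q)) (sin (2*p) * sin (2*q)) (cos (2*p)) r c"
  using assms unfolding D_support_def
  by (elim disjE) (simp_all add: D_phase_def phase_cos_def cos_diff cos_add sin_diff sin_add
      cos_double sin_double)

definition Dreal :: "real \<Rightarrow> real \<Rightarrow> real \<Rightarrow> nat \<Rightarrow> nat \<Rightarrow> real" where
  "Dreal a b P i j = (if D_support i \<and> D_support j then phase_cos a b P i j / 8 else 0)"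

lemma tr8_Dop_eq_Dreal:
  "tr8 R (Dop \<alpha> n) =
     tr8 R (cmat (Dreal (cos (2*\<alpha>)) (sin (2 * real n * \<alpha>) * sin (2*\<alpha>)) (cos (2 * real n * \<alpha>))))"
proof (rule tr8_cong)
  fix i j :: nat assume "i < 8" "j < 8"
  then show "Dop \<alpha> n i j =
      cmat (Dreal (cos (2*\<alpha>)) (sin (2 * real n * \<alpha>) * sin (2*\<alpha>)) (cos (2 * real n * \<alpha>))) i j"
    using cos_D_phase_diff[of i j "real n * \<alpha>" \<alpha>]
    by (simp add: Dop_eq_cos_phase cmat_def Dreal_def mult.assoc)
qed

section \<open>The dual certificate\<close>

lemma sum_lessThan_4: "(\<Sum>k<4. (f :: nat \<Rightarrow> _) k) = f 0 + f 1 + f 2 + (f 3 :: 'a :: comm_monoid_add)"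
  by (simp add: eval_nat_numeral add.assoc)

lemma sum_lessThan_8:
  "(\<Sum>k<8. (f :: nat \<Rightarrow> _) k) = f 0 + f 1 + f 2 + f 3 + f 4 + f 5 + f 6 + (f 7 :: 'a :: comm_monoid_add)"
  by (simp add: eval_nat_numeral add.assoc)

text \<open>dual_block is Y on H0 \<otimes> H1 (index 2 a0 + a1); dual_cert is Y \<otimes> I.\<close>
definition dual_block :: "real \<Rightarrow> real \<Rightarrow> real \<Rightarrow> real \<Rightarrow> nat \<Rightarrow> nat \<Rightarrow> real" where
  "dual_block a b P S x y = (if x mod 2 \<noteq> y mod 2 then 0
     else if x = y then (if x = 0 \<or> x = 3 then (S + S*S + b*a*P) / (8*S) else (S + S*S - b*a*P) / (8*S))
     else P * (S + a*a) / (8*S))"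

definition dual_cert :: "real \<Rightarrow> real \<Rightarrow> real \<Rightarrow> real \<Rightarrow> nat \<Rightarrow> nat \<Rightarrow> real" where
  "dual_cert a b P S i j = (if i mod 2 = j mod 2 then dual_block a b P S (i div 2) (j div 2) else 0)"

definition unit_vec :: "nat \<Rightarrow> nat \<Rightarrow> real" where
  "unit_vec k = (\<lambda>i. if i = k then 1 else 0)"

definition slack_gram :: "real \<Rightarrow> real \<Rightarrow> real \<Rightarrow> real \<Rightarrow> (nat \<Rightarrow> real) \<Rightarrow> (nat \<Rightarrow> real) \<Rightarrow> nat \<Rightarrow> nat \<Rightarrow> real" where
  "slack_gram a b P S = gram2 ((S*S - b*a*P) / (8*S)) (P*a*a / (8*S)) ((S*S + b*a*P) / (8*S))"

definition plain_gram :: "real \<Rightarrow> (nat \<Rightarrow> real) \<Rightarrow> (nat \<Rightarrow> real) \<Rightarrow> nat \<Rightarrow> nat \<Rightarrow> real" where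
  "plain_gram P = gram2 (1/8) (P/8) (1/8)"

definition dual_slack :: "real \<Rightarrow> real \<Rightarrow> real \<Rightarrow> real \<Rightarrow> nat \<Rightarrow> nat \<Rightarrow> real" where
  "dual_slack a b P S = (\<lambda>i j.
       slack_gram a b P S (\<lambda>k. if k = 0 then - a/S else if k = 4 then b/S else if k = 3 then 1 else 0)
                          (\<lambda>k. if k = 0 then - b/S else if k = 4 then - a/S else if k = 7 then 1 else 0) i j
     + plain_gram P (unit_vec 1) (unit_vec 5) i j
     + slack_gram a b P S (\<lambda>k. if k = 1 then a/S else if k = 5 then - b/S else 0)
                          (\<lambda>k. if k = 1 then b/S else if k = 5 then a/S else 0) i j
     + plain_gram P (unit_vec 2) (unit_vec 6) i j
     + slack_gram a b P S (unit_vec 2) (unit_vec 6) i j)"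

lemma dual_cert_eq_Dreal_add_slack:
  assumes S: "S > 0" and hS: "S*S = a*a + b*b" and "i < 8" "j < 8"
  shows "dual_cert a b P S i j = Dreal a b P i j + dual_slack a b P S i j"
proof -
  have "S \<noteq> 0" using S by simp
  then have "\<forall>i\<in>{0,1,2,3,4,5,6,7}. \<forall>j\<in>{0,1,2,3,4,5,6,7}.
      dual_cert a b P S i j = Dreal a b P i j + dual_slack a b P S i j"
    apply (simp only: ball_simps)
    apply (intro conjI)
    apply (simp_all add: dual_cert_def dual_block_def Dreal_def D_support_def phase_cos_def
        dual_slack_def slack_gram_def plain_gram_def gram2_def unit_vec_def)
    apply (simp_all add: field_simps)
    apply (use hS in algebra)+
    done
  moreover have "i \<in> {0,1,2,3,4,5,6,7}" "j \<in> {0,1,2,3,4,5,6,7}" using assms(3,4) by auto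
  ultimately show ?thesis by blast
qed

lemma tr8_dual_cert:
  assumes "AD_feasible R" "S > 0"
  shows "tr8 R (cmat (dual_cert a b P S)) = of_real ((1 + S) / 2)"
proof -
  have Tr2: "ptrace2 R x y = (if x = y then 1 else 0)" if "x < 4" "y < 4" for x y
    using assms(1) that unfolding AD_feasible_def by blast
  have "tr8 R (cmat (dual_cert a b P S)) =
      (\<Sum>x<4. \<Sum>y<4. ptrace2 R x y * of_real (dual_block a b P S y x))"
    unfolding tr8_def ptrace2_def cmat_def sum_lessThan_8 sum_lessThan_4 sum_lessThan_2
    by (simp add: dual_cert_def) (simp add: numeral_eq_Suc algebra_simps)
  also have "\<dots> = of_real (dual_block a b P S 0 0 + dual_block a b P S 1 1
                          + dual_block a b P S 2 2 + dual_block a b P S 3 3)"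
    unfolding sum_lessThan_4 by (simp add: Tr2)
  also have "dual_block a b P S 0 0 + dual_block a b P S 1 1 + dual_block a b P S 2 2
               + dual_block a b P S 3 3 = (1 + S) / 2"
    using assms(2) by (simp add: dual_block_def field_simps)
  finally show ?thesis .
qed

lemma slack_gram_coeffs:
  fixes a b P S :: real
  assumes S: "S > 0" and hS: "S*S = a*a + b*b" and P: "P\<^sup>2 \<le> 1"
  shows "0 \<le> (S*S - b*a*P) / (8*S)" "0 \<le> (S*S + b*a*P) / (8*S)"
    "(P*a*a / (8*S))\<^sup>2 \<le> ((S*S - b*a*P) / (8*S)) * ((S*S + b*a*P) / (8*S))"
proof -
  have q: "0 \<le> b\<^sup>2 * (1 - P\<^sup>2/4)" using P by simp
  have "S*S - b*a*P = (a - b*P/2)\<^sup>2 + b\<^sup>2 * (1 - P\<^sup>2/4)"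
    using hS by (simp add: algebra_simps power2_eq_square)
  then have minus: "0 \<le> S*S - b*a*P" using q by simp
  have "S*S + b*a*P = (a + b*P/2)\<^sup>2 + b\<^sup>2 * (1 - P\<^sup>2/4)"
    using hS by (simp add: algebra_simps power2_eq_square)
  then have plus: "0 \<le> S*S + b*a*P" using q by simp
  show "0 \<le> (S*S - b*a*P) / (8*S)" "0 \<le> (S*S + b*a*P) / (8*S)"
    using minus plus S by simp_all
  have "(S*S - b*a*P) * (S*S + b*a*P) - (P*a*a)\<^sup>2 = (S*S) * (a*a*(1 - P\<^sup>2) + b*b)"
    using hS by algebra
  moreover have "0 \<le> (S*S) * (a*a*(1 - P\<^sup>2) + b*b)" using P by simp
  ultimately have "(P*a*a)\<^sup>2 \<le> (S*S - b*a*P) * (S*S + b*a*P)" by linarith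
  then have "(P*a*a)\<^sup>2 / (8*S)\<^sup>2 \<le> (S*S - b*a*P) * (S*S + b*a*P) / (8*S)\<^sup>2"
    by (rule divide_right_mono) simp
  then show "(P*a*a / (8*S))\<^sup>2 \<le> ((S*S - b*a*P) / (8*S)) * ((S*S + b*a*P) / (8*S))"
    by (simp add: power_divide power2_eq_square)
qed

lemma tr8_dual_slack_nonneg:
  assumes R: "psd8 R" and S: "S > 0" and hS: "S*S = a*a + b*b" and P: "P\<^sup>2 \<le> 1"
  shows "0 \<le> Re (tr8 R (cmat (dual_slack a b P S)))"
proof -
  have slack: "0 \<le> Re (tr8 R (cmat (slack_gram a b P S x y)))" for x y
    unfolding slack_gram_def using R slack_gram_coeffs[OF S hS P] by (rule tr8_gram2_nonneg)
  have "(P/8)\<^sup>2 \<le> 1/8 * (1/8)" using P by (simp add: power_divide)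
  then have plain: "0 \<le> Re (tr8 R (cmat (plain_gram P x y)))" for x y
    unfolding plain_gram_def using R by (intro tr8_gram2_nonneg) simp_all
  show ?thesis
    unfolding dual_slack_def tr8_cmat_add plus_complex.sel
    by (intro add_nonneg_nonneg slack plain)
qed

lemma AD_dual_bound:
  assumes F: "AD_feasible R" and S: "S > 0" and hS: "S*S = a*a + b*b" and P: "P\<^sup>2 \<le> 1"
  shows "Re (tr8 R (cmat (Dreal a b P))) \<le> (1 + S) / 2"
proof -
  have "of_real ((1 + S) / 2) = tr8 R (cmat (dual_cert a b P S))"
    using F S by (rule tr8_dual_cert[symmetric])
  also have "\<dots> = tr8 R (cmat (\<lambda>i j. Dreal a b P i j + dual_slack a b P S i j))"
    by (rule tr8_cong) (simp add: cmat_def dual_cert_eq_Dreal_add_slack[OF S hS])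
  also have "\<dots> = tr8 R (cmat (Dreal a b P)) + tr8 R (cmat (dual_slack a b P S))"
    by (rule tr8_cmat_add)
  finally have "(1 + S) / 2 = Re (tr8 R (cmat (Dreal a b P))) + Re (tr8 R (cmat (dual_slack a b P S)))"
    by (metis Re_complex_of_real plus_complex.sel(1))
  moreover have "0 \<le> Re (tr8 R (cmat (dual_slack a b P S)))"
    using F S hS P unfolding AD_feasible_def by (blast intro: tr8_dual_slack_nonneg)
  ultimately show ?thesis by linarith
qed

section \<open>The optimal Choi operator\<close>

definition opt_u1 :: "real \<Rightarrow> real \<Rightarrow> real \<Rightarrow> nat \<Rightarrow> real" where
  "opt_u1 a b S = (\<lambda>i. if i = 0 then 1 else if i = 3 then a/S else if i = 7 then b/S else 0)"

definition opt_u2 :: "real \<Rightarrow> real \<Rightarrow> real \<Rightarrow> nat \<Rightarrow> real" where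
  "opt_u2 a b S = (\<lambda>i. if i = 4 then 1 else if i = 3 then - b/S else if i = 7 then a/S else 0)"

definition opt_choi :: "real \<Rightarrow> real \<Rightarrow> real \<Rightarrow> nat \<Rightarrow> nat \<Rightarrow> complex" where
  "opt_choi a b S = cmat (\<lambda>i j. opt_u1 a b S i * opt_u1 a b S j + opt_u2 a b S i * opt_u2 a b S j)"

lemma quadratic_form_real_outer:
  fixes u :: "nat \<Rightarrow> real"
  shows "(\<Sum>i<8. \<Sum>j<8. cnj (v i) * of_real (u i * u j) * v j)
       = cnj (\<Sum>j<8. of_real (u j) * v j) * (\<Sum>j<8. of_real (u j) * v j)"
proof -
  have "cnj (\<Sum>j<8. of_real (u j) * v j) * (\<Sum>j<8. of_real (u j) * v j)
      = (\<Sum>i<8. \<Sum>j<8. cnj (of_real (u i) * v i) * (of_real (u j) * v j))"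
    by (simp add: sum_product)
  also have "\<dots> = (\<Sum>i<8. \<Sum>j<8. cnj (v i) * of_real (u i * u j) * v j)"
    by (intro sum.cong refl) (simp add: mult_ac)
  finally show ?thesis by simp
qed

lemma opt_choi_psd: "psd8 (opt_choi a b S)"
  unfolding psd8_def
proof
  fix v :: "nat \<Rightarrow> complex"
  have expand: "cnj (v i) * opt_choi a b S i j * v j =
      cnj (v i) * of_real (opt_u1 a b S i * opt_u1 a b S j) * v j
    + cnj (v i) * of_real (opt_u2 a b S i * opt_u2 a b S j) * v j" for i j
    by (simp add: opt_choi_def cmat_def algebra_simps)
  have square_nonneg: "0 \<le> cnj z * z" for z :: complex
    by (simp add: less_eq_complex_def)
  show "0 \<le> (\<Sum>i<8. \<Sum>j<8. cnj (v i) * opt_choi a b S i j * v j)"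
    unfolding expand sum.distrib quadratic_form_real_outer
    by (intro add_nonneg_nonneg square_nonneg)
qed

lemma opt_choi_AD_feasible:
  assumes S: "S > 0" and hS: "S*S = a*a + b*b"
  shows "AD_feasible (opt_choi a b S)"
proof -
  have "S \<noteq> 0" using S by simp
  then have "\<forall>x\<in>{0,1,2,3}. \<forall>y\<in>{0,1,2,3}. ptrace2 (opt_choi a b S) x y = (if x = y then 1 else 0)"
    apply (simp only: ball_simps)
    apply (simp add: ptrace2_def sum_lessThan_2 opt_choi_def cmat_def opt_u1_def opt_u2_def)
    apply (simp add: field_simps flip: of_real_mult of_real_add)
    apply (use hS in algebra)
    done
  moreover have "x < 4 \<Longrightarrow> x \<in> {0,1,2,3}" for x :: nat by auto
  ultimately show ?thesis
    unfolding AD_feasible_def using opt_choi_psd by blast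
qed

lemma tr8_opt_choi_Dreal:
  assumes S: "S > 0" and hS: "S*S = a*a + b*b"
  shows "tr8 (opt_choi a b S) (cmat (Dreal a b P)) = of_real ((1 + S) / 2)"
proof -
  have "S \<noteq> 0" using S by simp
  have "tr8 (opt_choi a b S) (cmat (Dreal a b P)) = of_real (\<Sum>i<8. \<Sum>j<8.
      (opt_u1 a b S i * opt_u1 a b S j + opt_u2 a b S i * opt_u2 a b S j) * Dreal a b P j i)"
    by (simp add: tr8_def opt_choi_def cmat_def)
  also have "(\<Sum>i<8. \<Sum>j<8.
      (opt_u1 a b S i * opt_u1 a b S j + opt_u2 a b S i * opt_u2 a b S j) * Dreal a b P j i) = (1 + S) / 2"
    unfolding sum_lessThan_8
    apply (simp add: opt_u1_def opt_u2_def Dreal_def D_support_def phase_cos_def)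
    apply (simp add: field_simps \<open>S \<noteq> 0\<close>)
    apply (use hS in algebra)
    done
  finally show ?thesis .
qed

lemma one_minus_sin_cos_sq:
  fixes \<alpha> t :: real
  shows "1 - (sin (2*\<alpha>) * cos (2*t))\<^sup>2 = (cos (2*\<alpha>))\<^sup>2 + (sin (2*t) * sin (2*\<alpha>))\<^sup>2"
proof -
  have "(sin (2*\<alpha>))\<^sup>2 + (cos (2*\<alpha>))\<^sup>2 = 1" "(sin (2*t))\<^sup>2 + (cos (2*t))\<^sup>2 = 1" by simp_all
  then show ?thesis by algebra
qed

lemma sin_cos_product_sq_less_one:
  assumes "n \<ge> 1" and "0 < \<alpha>" and "\<alpha> < pi / (4 * real n)"
  shows "(sin (2*\<alpha>) * cos (2 * real n * \<alpha>))\<^sup>2 < 1"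
proof -
  have "pi / (4 * real n) \<le> pi / 4"
    using assms(1) by (intro divide_left_mono) auto
  then have "0 < 2*\<alpha>" "2*\<alpha> < pi/2" using assms(2,3) by linarith+
  then have "0 < cos (2*\<alpha>)" by (intro cos_gt_zero) auto
  then have "(sin (2*\<alpha>))\<^sup>2 < 1"
    by (simp add: sin_squared_eq)
  moreover have "(sin (2*\<alpha>) * cos (2 * real n * \<alpha>))\<^sup>2 \<le> (sin (2*\<alpha>))\<^sup>2"
    unfolding power_mult_distrib by (rule mult_left_le) (simp_all add: abs_square_le_1)
  ultimately show ?thesis by linarith
qed

theorem mainTheorem7:
  fixes n :: nat and \<alpha> :: real
  assumes "n \<ge> 1" and "0 < \<alpha>" and "\<alpha> < pi / (4 * real n)"
  shows "(\<exists>R. AD_feasible R \<and>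
            tr8 R (Dop \<alpha> n) = of_real (1/2 + 1/2 * sqrt (1 - (sin (2*\<alpha>) * cos (2 * real n * \<alpha>))^2)))
       \<and> (\<forall>R. AD_feasible R \<longrightarrow>
            Re (tr8 R (Dop \<alpha> n)) \<le> 1/2 + 1/2 * sqrt (1 - (sin (2*\<alpha>) * cos (2 * real n * \<alpha>))^2))"
proof -
  define a where "a = cos (2*\<alpha>)"
  define b where "b = sin (2 * real n * \<alpha>) * sin (2*\<alpha>)"
  define P where "P = cos (2 * real n * \<alpha>)"
  define S where "S = sqrt (1 - (sin (2*\<alpha>) * P)\<^sup>2)"
  have S: "S > 0"
    using sin_cos_product_sq_less_one[OF assms] by (simp add: S_def P_def)
  have hS: "S*S = a*a + b*b"
    using sin_cos_product_sq_less_one[OF assms] one_minus_sin_cos_sq[of \<alpha> "real n * \<alpha>"]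
    by (simp add: S_def P_def a_def b_def mult.assoc power2_eq_square)
  have P: "P\<^sup>2 \<le> 1"
    by (simp add: P_def abs_square_le_1)
  have D: "tr8 R (Dop \<alpha> n) = tr8 R (cmat (Dreal a b P))" for R
    unfolding a_def b_def P_def by (rule tr8_Dop_eq_Dreal)
  have claimed_value: "1/2 + 1/2 * sqrt (1 - (sin (2*\<alpha>) * cos (2 * real n * \<alpha>))^2) = (1 + S) / 2"
    by (simp add: S_def P_def)
  show ?thesis
    unfolding D claimed_value
    using opt_choi_AD_feasible[OF S hS] tr8_opt_choi_Dreal[OF S hS] AD_dual_bound[OF _ S hS P]
    by blast
qed

end
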